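(* Let $G$ be a cubic graph with a 3-decomposition, let $u$ be a vertex of $G$ with neighbours $v_1,v_2,v_3$, and let $H$ be obtained from $G$ by deleting $u$, adding a triangle $u_1u_2u_3u_1$ on new vertices, and adding the edges $u_1v_1,u_2v_2,u_3v_3$. Then $H$ has a 3-decomposition.
   Context: All graphs are finite and simple; cubic means 3-regular. A 3-decomposition of a graph is a partition of its edge set into the edge sets of a spanning tree, a (possibly empty) 2-regular subgraph, and a (possibly empty) matching. *)

theory Defs
  imports Main
begin

definition simple_graph :: "'a set \<Rightarrow> 'a set set \<Rightarrow> bool" where
  "simple_graph V E \<longleftrightarrow> finite V \<and>
     (\<forall>e\<in>E. \<exists>x y. x \<in> V \<and> y \<in> V \<and> x \<noteq> y \<and> e = {x, y})"

definition degree :: "'a set set \<Rightarrow> 'a \<Rightarrow> nat" where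
  "degree F v = card {e \<in> F. v \<in> e}"

definition cubic :: "'a set \<Rightarrow> 'a set set \<Rightarrow> bool" where
  "cubic V E \<longleftrightarrow> simple_graph V E \<and> (\<forall>v\<in>V. degree E v = 3)"

definition connected_on :: "'a set \<Rightarrow> 'a set set \<Rightarrow> bool" where
  "connected_on V F \<longleftrightarrow>
     (\<forall>x\<in>V. \<forall>y\<in>V. (x, y) \<in> {(a, b). {a, b} \<in> F}\<^sup>*)"

definition is_cycle :: "'a set set \<Rightarrow> 'a list \<Rightarrow> bool" where
  "is_cycle F cs \<longleftrightarrow> length cs \<ge> 3 \<and> distinct cs \<and>
     (\<forall>i. Suc i < length cs \<longrightarrow> {cs ! i, cs ! Suc i} \<in> F) \<and>
     {last cs, hd cs} \<in> F"

definition acyclic_edges :: "'a set set \<Rightarrow> bool" where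
  "acyclic_edges F \<longleftrightarrow> \<not> (\<exists>cs. is_cycle F cs)"

definition spanning_tree :: "'a set \<Rightarrow> 'a set set \<Rightarrow> 'a set set \<Rightarrow> bool" where
  "spanning_tree V E T \<longleftrightarrow> T \<subseteq> E \<and> connected_on V T \<and> acyclic_edges T"

definition two_regular_sub :: "'a set \<Rightarrow> 'a set set \<Rightarrow> 'a set set \<Rightarrow> bool" where
  "two_regular_sub V E C \<longleftrightarrow> C \<subseteq> E \<and> (\<forall>v\<in>V. degree C v = 0 \<or> degree C v = 2)"

definition matching :: "'a set set \<Rightarrow> 'a set set \<Rightarrow> bool" where
  "matching E M \<longleftrightarrow> M \<subseteq> E \<and> (\<forall>e\<in>M. \<forall>f\<in>M. e \<noteq> f \<longrightarrow> e \<inter> f = {})"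

definition three_decomposition :: "'a set \<Rightarrow> 'a set set \<Rightarrow> bool" where
  "three_decomposition V E \<longleftrightarrow>
     (\<exists>T C M. spanning_tree V E T \<and> two_regular_sub V E C \<and> matching E M \<and>
        T \<union> C \<union> M = E \<and> T \<inter> C = {} \<and> T \<inter> M = {} \<and> C \<inter> M = {})"

end

(* Lift a 3-decomposition T, C, M of G along the map from H to G that contracts the triangle
   back to u: every edge of G other than the u v_i is an edge of H, u v_i corresponds to u_i v_i,
   and lift F denotes the set of these preimages of the edges of F.  As u has degree 0 or 2 in C
   and at most 1 in M, the triangle can be labelled m, a, b so that either u v_a, u v_b lie in C
   and u v_m does not, or C avoids u and M avoids u v_a, u v_b.  The three triangle vertices lie
   in different components of the forest lift T, so adding the triangle edges m a and m b gives a
   spanning tree of H; the remaining edge a b closes the lifted cycle through a and b in the first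
   case, and is disjoint from every edge of lift M in the second. *)

theory Submission
  imports Defs "HOL-Library.Transitive_Closure_Table"
begin

definition adj :: "'a set set \<Rightarrow> ('a \<times> 'a) set" where
  "adj F = {(a, b). {a, b} \<in> F}"

lemma adj_iff [simp]: "(a, b) \<in> adj F \<longleftrightarrow> {a, b} \<in> F"
  by (simp add: adj_def)

lemma connected_on_adj: "connected_on V F \<longleftrightarrow> (\<forall>x\<in>V. \<forall>y\<in>V. (x, y) \<in> (adj F)\<^sup>*)"
  by (simp add: connected_on_def adj_def)

lemma converse_adj [simp]: "(adj F)\<inverse> = adj F"
  by (auto simp: adj_def insert_commute)

lemma rtrancl_adj_sym: "(a, b) \<in> (adj F)\<^sup>* \<Longrightarrow> (b, a) \<in> (adj F)\<^sup>*"
  using rtrancl_converseI[of a b "adj F"] by simp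

lemma rtrancl_adj_mono: "F \<subseteq> G \<Longrightarrow> (a, b) \<in> (adj F)\<^sup>* \<Longrightarrow> (a, b) \<in> (adj G)\<^sup>*"
  by (rule rtrancl_mono[THEN subsetD, of "adj F"]) (auto simp: adj_def)

lemma rtrancl_adj_step: "(a, b) \<in> (adj F)\<^sup>* \<Longrightarrow> {b, c} \<in> F \<Longrightarrow> (a, c) \<in> (adj F)\<^sup>*"
  using rtrancl_into_rtrancl[of a b "adj F" c] by simp

lemma rtrancl_adj_closed:
  assumes "(a, b) \<in> (adj F)\<^sup>*" "a \<in> S" "\<And>x y. {x, y} \<in> F \<Longrightarrow> x \<in> S \<Longrightarrow> y \<in> S"
  shows "b \<in> S"
  using assms(1,2) by induction (auto dest: assms(3))

lemma rtrancl_adj_isolated: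
  assumes "(x, a) \<in> (adj F)\<^sup>*" "a \<notin> \<Union>F"
  shows "x = a"
  using rtrancl_adj_closed[OF rtrancl_adj_sym[OF assms(1)], of "{a}"] assms(2) by blast

lemma rtrancl_adj_image:
  assumes "(a, b) \<in> (adj F)\<^sup>*" "\<And>x y. {x, y} \<in> F \<Longrightarrow> f x = f y \<or> {f x, f y} \<in> G"
  shows "(f a, f b) \<in> (adj G)\<^sup>*"
  using assms(1)
proof induction
  case (step y z)
  then have "f y = f z \<or> {f y, f z} \<in> G" by (simp add: assms(2))
  then show ?case using step.IH by (metis adj_iff rtrancl.rtrancl_into_rtrancl)
qed simp

lemma rtrancl_adj_insert:
  assumes "(p, q) \<in> (adj (insert {x, y} F))\<^sup>*"
  shows "(p, q) \<in> (adj F)\<^sup>* \<or> ((p, x) \<in> (adj F)\<^sup>* \<and> (y, q) \<in> (adj F)\<^sup>*) \<or>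
    ((p, y) \<in> (adj F)\<^sup>* \<and> (x, q) \<in> (adj F)\<^sup>*)"
  using assms
proof induction
  case (step r s)
  then have "{r, s} \<in> F \<or> (r = x \<and> s = y) \<or> (r = y \<and> s = x)"
    by (auto simp: doubleton_eq_iff)
  then show ?case using step.IH by (meson adj_iff rtrancl.rtrancl_into_rtrancl rtrancl.rtrancl_refl)
qed simp

lemma cycle_has_non_bridge:
  assumes "is_cycle F cs"
  shows "\<exists>a b. {a, b} \<in> F \<and> a \<noteq> b \<and> (a, b) \<in> (adj (F - {{a, b}}))\<^sup>*"
proof -
  define n where "n = length cs"
  have n: "n \<ge> 3" and dist: "distinct cs" and step: "\<And>i. Suc i < n \<Longrightarrow> {cs ! i, cs ! Suc i} \<in> F"
    using assms by (auto simp: is_cycle_def n_def)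
  have "cs \<noteq> []" using n n_def by auto
  then have closing: "{cs ! 0, cs ! (n - 1)} \<in> F"
    using assms by (simp add: is_cycle_def hd_conv_nth last_conv_nth insert_commute n_def)
  let ?H = "F - {{cs ! 0, cs ! (n - 1)}}"
  have path: "(cs ! 0, cs ! k) \<in> (adj ?H)\<^sup>*" if "k < n" for k
    using that
  proof (induction k)
    case (Suc k)
    have "k < n" "Suc k < n" "0 < n" "n - 1 < n" using Suc.prems by auto
    then have "cs ! k \<noteq> cs ! (n - 1)" "cs ! Suc k \<noteq> cs ! 0"
      "cs ! k = cs ! 0 \<Longrightarrow> cs ! Suc k \<noteq> cs ! (n - 1)"
      using n unfolding n_def by (simp_all add: nth_eq_iff_index_eq[OF dist])
    then have "{cs ! k, cs ! Suc k} \<noteq> {cs ! 0, cs ! (n - 1)}"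
      by (auto simp: doubleton_eq_iff)
    then have "{cs ! k, cs ! Suc k} \<in> ?H" using step Suc.prems by simp
    then show ?case using Suc by (meson Suc_lessD adj_iff rtrancl.rtrancl_into_rtrancl)
  qed simp
  have "0 < n" "n - 1 < n" "n - 1 \<noteq> 0" using n by auto
  then have "cs ! 0 \<noteq> cs ! (n - 1)"
    unfolding n_def by (simp add: nth_eq_iff_index_eq[OF dist])
  moreover have "(cs ! 0, cs ! (n - 1)) \<in> (adj ?H)\<^sup>*" using path n by simp
  ultimately show ?thesis using closing by blast
qed

lemma acyclic_edges_bridge:
  assumes "acyclic_edges F" "{a, b} \<in> F" "a \<noteq> b"
  shows "(a, b) \<notin> (adj (F - {{a, b}}))\<^sup>*"
proof
  let ?r = "\<lambda>x y. {x, y} \<in> F - {{a, b}}"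
  assume "(a, b) \<in> (adj (F - {{a, b}}))\<^sup>*"
  then have "?r\<^sup>*\<^sup>* a b"
    by (simp add: adj_def rtranclp_rtrancl_eq[symmetric])
  then obtain xs where "rtrancl_path ?r a xs b"
    by (auto simp: rtranclp_eq_rtrancl_path)
  then obtain ps where path: "rtrancl_path ?r a ps b" and dist: "distinct (a # ps)"
    by (rule rtrancl_path_distinct)
  have "ps \<noteq> []" using path assms(3) by (auto elim: rtrancl_path.cases)
  then have last: "last ps = b" using path by (rule rtrancl_path_last[rotated])
  have edge: "{(a # ps) ! i, (a # ps) ! Suc i} \<in> F - {{a, b}}" if "i < length ps" for i
    using rtrancl_path_nth[OF path that] by simp
  have "length ps \<noteq> 1"
  proof
    assume "length ps = 1"
    then have "ps = [b]" using last by (cases ps) auto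
    then show False using edge[of 0] by simp
  qed
  with \<open>ps \<noteq> []\<close> have "length ps \<ge> 2" by (cases ps) (auto simp: Suc_le_eq)
  then have "is_cycle F (a # ps)"
    using dist edge last assms(2)
    by (auto simp: is_cycle_def insert_commute Suc_le_eq)
  then show False using assms(1) by (auto simp: acyclic_edges_def)
qed

lemma acyclic_edges_insert:
  assumes acyc: "acyclic_edges F" and sep: "(x, y) \<notin> (adj F)\<^sup>*"
  shows "acyclic_edges (insert {x, y} F)"
proof -
  have "(p, q) \<notin> (adj (insert {x, y} F - {{p, q}}))\<^sup>*"
    if pq: "{p, q} \<in> insert {x, y} F" "p \<noteq> q" for p q
  proof
    assume path: "(p, q) \<in> (adj (insert {x, y} F - {{p, q}}))\<^sup>*"
    show False
    proof (cases "{p, q} = {x, y}")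
      case True
      then have "insert {x, y} F - {{p, q}} \<subseteq> F" by auto
      then have "(p, q) \<in> (adj F)\<^sup>*" using path by (rule rtrancl_adj_mono)
      then show False using sep True by (auto simp: doubleton_eq_iff dest: rtrancl_adj_sym)
    next
      case False
      let ?H = "F - {{p, q}}"
      have pqF: "{p, q} \<in> F" using pq False by simp
      have "(p, q) \<in> (adj (insert {x, y} ?H))\<^sup>*"
        using path by (rule rtrancl_adj_mono[rotated]) auto
      moreover have "(p, q) \<notin> (adj ?H)\<^sup>*" using acyclic_edges_bridge[OF acyc pqF pq(2)] .
      moreover have "(a, b) \<in> (adj F)\<^sup>*"
        if "(a, p) \<in> (adj ?H)\<^sup>*" "(q, b) \<in> (adj ?H)\<^sup>*" for a b
      proof -
        have "(a, p) \<in> (adj F)\<^sup>*" "(q, b) \<in> (adj F)\<^sup>*"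
          using that by (auto intro: rtrancl_adj_mono[rotated])
        then show ?thesis using pqF by (meson adj_iff rtrancl.rtrancl_into_rtrancl rtrancl_trans)
      qed
      ultimately show False
        using sep rtrancl_adj_insert[of p q x y ?H] by (blast dest: rtrancl_adj_sym)
    qed
  qed
  then show ?thesis unfolding acyclic_edges_def by (blast dest: cycle_has_non_bridge)
qed

lemma acyclic_edges_inj_image:
  assumes inj: "inj_on ((`) f) G" and img: "(`) f ` G \<subseteq> F"
    and loopless: "\<And>x y. {x, y} \<in> G \<Longrightarrow> f x \<noteq> f y" and acyc: "acyclic_edges F"
  shows "acyclic_edges G"
proof -
  have "(p, q) \<notin> (adj (G - {{p, q}}))\<^sup>*" if pq: "{p, q} \<in> G" for p q
  proof
    assume path: "(p, q) \<in> (adj (G - {{p, q}}))\<^sup>*"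
    have fpq: "{f p, f q} \<in> F" "f p \<noteq> f q" using pq img loopless by auto
    have "(f p, f q) \<in> (adj (F - {{f p, f q}}))\<^sup>*"
    proof (rule rtrancl_adj_image[OF path])
      fix x y assume xy: "{x, y} \<in> G - {{p, q}}"
      then have "f ` {x, y} \<noteq> f ` {p, q}" using inj_onD[OF inj _ _ pq] by blast
      then show "f x = f y \<or> {f x, f y} \<in> F - {{f p, f q}}" using xy img by auto
    qed
    then show False using acyclic_edges_bridge[OF acyc fpq] by simp
  qed
  then show ?thesis unfolding acyclic_edges_def by (blast dest: cycle_has_non_bridge)
qed

lemma connected_on_lift:
  assumes conn: "connected_on V F" and into: "f ` V' \<subseteq> V"
    and edges: "\<And>e. e \<in> F \<Longrightarrow> \<exists>x y. {x, y} \<in> G \<and> x \<in> V' \<and> y \<in> V' \<and> f ` {x, y} = e"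
    and fibres: "\<And>x y. x \<in> V' \<Longrightarrow> y \<in> V' \<Longrightarrow> f x = f y \<Longrightarrow> (x, y) \<in> (adj G)\<^sup>*"
  shows "connected_on V' G"
proof -
  have "(a', b') \<in> (adj G)\<^sup>*"
    if "(a, b) \<in> (adj F)\<^sup>*" "a' \<in> V'" "f a' = a" "b' \<in> V'" "f b' = b" for a b a' b'
    using that
  proof (induction arbitrary: b' rule: rtrancl_induct)
    case base
    then show ?case using fibres by simp
  next
    case (step y z)
    obtain p q where pq: "{p, q} \<in> G" "p \<in> V'" "q \<in> V'" "f p = y" "f q = z"
    proof -
      obtain x1 y1 where g: "{x1, y1} \<in> G" "x1 \<in> V'" "y1 \<in> V'" "f ` {x1, y1} = {y, z}"
        using edges[of "{y, z}"] step.hyps(2) by auto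
      then have "f x1 = y \<and> f y1 = z \<or> f x1 = z \<and> f y1 = y" by (simp add: doubleton_eq_iff)
      then show thesis using g that[of x1 y1] that[of y1 x1] by (auto simp: insert_commute)
    qed
    have "(a', p) \<in> (adj G)\<^sup>*" using step.IH pq step.prems by simp
    then have "(a', q) \<in> (adj G)\<^sup>*" using pq(1) by (rule rtrancl_adj_step)
    moreover have "(q, b') \<in> (adj G)\<^sup>*" using fibres pq step.prems by simp
    ultimately show ?case by (rule rtrancl_trans)
  qed
  then show ?thesis using conn into unfolding connected_on_adj by blast
qed

lemma degree_matching_le_1:
  assumes "matching E M"
  shows "degree M v \<le> 1"
proof (cases "finite {e \<in> M. v \<in> e}")
  case True
  then show ?thesis using assms unfolding degree_def matching_def
    by (auto simp: card_le_Suc0_iff_eq)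
qed (simp add: degree_def)

lemma card_le_1_subset_singleton:
  assumes "finite U" "Q \<subseteq> U" "U \<noteq> {}" "card Q \<le> 1"
  obtains m where "m \<in> U" "Q \<subseteq> {m}"
proof (cases "Q = {}")
  case False
  then obtain q where "q \<in> Q" by blast
  moreover have "finite Q" using assms(1,2) by (rule finite_subset[rotated])
  ultimately have "Q \<subseteq> {q}" using assms(4) by (auto simp: card_le_Suc0_iff_eq)
  then show thesis using that \<open>q \<in> Q\<close> assms(2) by blast
qed (use assms(3) that in blast)

lemma card_3_split_pair:
  assumes "card U = 3" "P \<subseteq> U" "card P = 2"
  obtains m a b where "U = {m, a, b}" "m \<noteq> a" "m \<noteq> b" "a \<noteq> b" "P = {a, b}"
proof -
  obtain a b where ab: "P = {a, b}" "a \<noteq> b" using assms(3) by (auto simp: card_2_iff)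
  have "finite P" using assms(3) by (simp add: card_ge_0_finite)
  then have "card (U - P) = 1" using assms by (simp add: card_Diff_subset)
  then obtain m where "U - P = {m}" by (rule card_1_singletonE)
  then have "U = {m, a, b}" "m \<notin> P" using assms(2) ab by auto
  then show thesis using that ab by auto
qed

lemma card_3_split_point:
  assumes "card U = 3" "m \<in> U"
  obtains a b where "U = {m, a, b}" "m \<noteq> a" "m \<noteq> b" "a \<noteq> b"
proof -
  have "card (U - {m}) = 2" using assms by simp
  then obtain a b where "U - {m} = {a, b}" "a \<noteq> b" by (auto simp: card_2_iff)
  then show thesis using that assms(2) by auto
qed

(* U replaces u, and nu x is the neighbour of u that H joins to x. *)
locale triangle_replacement =
  fixes V :: "'a set" and E :: "'a set set" and u :: 'a and U :: "'a set" and nu :: "'a \<Rightarrow> 'a"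
  assumes graph: "simple_graph V E"
    and u_in_V: "u \<in> V"
    and U_disjoint: "U \<inter> V = {}"
    and card_U: "card U = 3"
    and nu_bij: "bij_betw nu U {v. {u, v} \<in> E}"
begin

definition VH :: "'a set" where
  "VH = V - {u} \<union> U"

definition lifted_edges :: "'a set set" where
  "lifted_edges = {e \<in> E. u \<notin> e} \<union> (\<lambda>x. {x, nu x}) ` U"

definition triangle :: "'a set set" where
  "triangle = {{x, y} | x y. x \<in> U \<and> y \<in> U \<and> x \<noteq> y}"

definition EH :: "'a set set" where
  "EH = lifted_edges \<union> triangle"

definition contract :: "'a \<Rightarrow> 'a" where
  "contract x = (if x \<in> U then u else x)"

definition lift :: "'a set set \<Rightarrow> 'a set set" where
  "lift F = {g \<in> lifted_edges. contract ` g \<in> F}"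

lemma E_doubleton: "e \<in> E \<Longrightarrow> \<exists>x y. x \<in> V \<and> y \<in> V \<and> x \<noteq> y \<and> e = {x, y}"
  using graph by (auto simp: simple_graph_def)

lemma edge_subset_V: "e \<in> E \<Longrightarrow> e \<subseteq> V"
  using E_doubleton by blast

lemma E_edge_neq: "{x, y} \<in> E \<Longrightarrow> x \<noteq> y"
  using E_doubleton by (metis doubleton_eq_iff insert_absorb2)

lemma nu_neighbour:
  assumes "x \<in> U"
  shows "{u, nu x} \<in> E" "nu x \<in> V" "nu x \<noteq> u" "nu x \<notin> U"
proof -
  show "{u, nu x} \<in> E" using bij_betw_apply[OF nu_bij assms] by simp
  then show "nu x \<in> V" "nu x \<noteq> u" using edge_subset_V E_edge_neq by auto
  then show "nu x \<notin> U" using U_disjoint by auto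
qed

lemma nu_eq_iff: "x \<in> U \<Longrightarrow> y \<in> U \<Longrightarrow> nu x = nu y \<longleftrightarrow> x = y"
  using bij_betw_imp_inj_on[OF nu_bij] by (auto dest: inj_onD)

lemma edge_at_u:
  assumes "e \<in> E" "u \<in> e"
  obtains x where "x \<in> U" "e = {u, nu x}"
proof -
  obtain v where "e = {u, v}" using assms E_doubleton by blast
  then have "v \<in> nu ` U" using assms(1) bij_betw_imp_surj_on[OF nu_bij] by auto
  then show thesis using that \<open>e = {u, v}\<close> by blast
qed

lemma U_not_in_V: "x \<in> U \<Longrightarrow> x \<notin> V"
  using U_disjoint by blast

lemma contract_U [simp]: "x \<in> U \<Longrightarrow> contract x = u"
  by (simp add: contract_def)

lemma contract_V [simp]: "x \<in> V \<Longrightarrow> contract x = x"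
  using U_not_in_V by (auto simp: contract_def)

lemma contract_edge [simp]: "e \<in> E \<Longrightarrow> contract ` e = e"
  using edge_subset_V by force

lemma contract_nu [simp]: "x \<in> U \<Longrightarrow> contract (nu x) = nu x"
  using nu_neighbour by simp

lemma lifted_edgesE:
  assumes "g \<in> lifted_edges"
  obtains (outer) "g \<in> E" "u \<notin> g" | (pendant) x where "x \<in> U" "g = {x, nu x}"
  using assms by (auto simp: lifted_edges_def)

lemma contract_lifted_edge: "g \<in> lifted_edges \<Longrightarrow> contract ` g \<in> E"
  by (erule lifted_edgesE) (simp_all add: nu_neighbour)

lemma contract_lifted_edge_cases:
  assumes "g \<in> lifted_edges"
  shows "u \<notin> contract ` g \<and> g \<in> E \<and> contract ` g = g \<or>
    (\<exists>x\<in>U. g = {x, nu x} \<and> contract ` g = {u, nu x})"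
  using assms by (cases rule: lifted_edgesE) (auto simp: nu_neighbour)

lemma inj_on_contract_lifted_edges: "inj_on ((`) contract) lifted_edges"
proof (rule inj_onI)
  fix g h assume g: "g \<in> lifted_edges" and h: "h \<in> lifted_edges" and eq: "contract ` g = contract ` h"
  show "g = h"
    using contract_lifted_edge_cases[OF g] contract_lifted_edge_cases[OF h]
  proof (elim disjE conjE bexE)
    fix x y assume "x \<in> U" "y \<in> U" "g = {x, nu x}" "h = {y, nu y}"
      "contract ` g = {u, nu x}" "contract ` h = {u, nu y}"
    then have "{u, nu x} = {u, nu y}" using eq by metis
    then have "nu x = nu y" using nu_neighbour \<open>x \<in> U\<close> by (metis doubleton_eq_iff)
    then show "g = h" using nu_eq_iff \<open>x \<in> U\<close> \<open>y \<in> U\<close> \<open>g = _\<close> \<open>h = _\<close> by simp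
  qed (metis eq insertI1)+
qed

lemma lifted_edge_in_VH:
  assumes "g \<in> lifted_edges"
  shows "\<exists>x y. g = {x, y} \<and> x \<in> VH \<and> y \<in> VH"
  using assms
proof (cases rule: lifted_edgesE)
  case outer
  then obtain x y where "x \<in> V" "y \<in> V" "g = {x, y}" using E_doubleton by blast
  then show ?thesis using outer(2) by (auto simp: VH_def)
next
  case (pendant x)
  then show ?thesis using nu_neighbour[OF pendant(1)] by (auto simp: VH_def)
qed

lemma lift_subset: "lift F \<subseteq> lifted_edges"
  by (auto simp: lift_def)

lemma lift_Un: "lift (A \<union> B) = lift A \<union> lift B"
  by (auto simp: lift_def)

lemma lift_E: "lift E = lifted_edges"
  using contract_lifted_edge by (auto simp: lift_def)

lemma lift_surj:
  assumes "F \<subseteq> E" "e \<in> F"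
  obtains g where "g \<in> lift F" "contract ` g = e"
proof (cases "u \<in> e")
  case True
  then obtain x where "x \<in> U" "e = {u, nu x}" using edge_at_u assms by blast
  then show thesis using that[of "{x, nu x}"] assms(2) by (auto simp: lift_def lifted_edges_def nu_neighbour)
next
  case False
  then show thesis using that[of e] assms by (auto simp: lift_def lifted_edges_def)
qed

lemma lift_edges_at_U:
  assumes "x \<in> U"
  shows "{g \<in> lift F. x \<in> g} = (if {u, nu x} \<in> F then {{x, nu x}} else {})"
proof -
  have only: "g = {x, nu x}" if "g \<in> lifted_edges" "x \<in> g" for g
    using that(1)
  proof (cases rule: lifted_edgesE)
    case outer
    then show ?thesis using that(2) assms edge_subset_V U_not_in_V by blast
  next
    case (pendant y)
    then show ?thesis using that(2) assms nu_neighbour by auto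
  qed
  have pendant_edge: "{x, nu x} \<in> lifted_edges" using assms by (simp add: lifted_edges_def)
  show ?thesis
  proof (intro equalityI subsetI)
    fix g assume "g \<in> {g \<in> lift F. x \<in> g}"
    then have g: "g \<in> lifted_edges" "contract ` g \<in> F" "x \<in> g" by (auto simp: lift_def)
    then have "g = {x, nu x}" using only by blast
    with g(2) assms show "g \<in> (if {u, nu x} \<in> F then {{x, nu x}} else {})" by simp
  qed (use pendant_edge assms in \<open>auto simp: lift_def split: if_splits\<close>)
qed

lemma degree_lift:
  assumes "F \<subseteq> E" "x \<in> V" "x \<noteq> u"
  shows "degree (lift F) x = degree F x"
proof -
  have "bij_betw ((`) contract) {g \<in> lift F. x \<in> g} {e \<in> F. x \<in> e}"
  proof (rule bij_betw_imageI)
    show "inj_on ((`) contract) {g \<in> lift F. x \<in> g}"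
      using inj_on_contract_lifted_edges by (rule inj_on_subset) (auto simp: lift_def)
    show "(`) contract ` {g \<in> lift F. x \<in> g} = {e \<in> F. x \<in> e}"
    proof (intro equalityI subsetI)
      fix e assume "e \<in> {e \<in> F. x \<in> e}"
      then obtain g where g: "g \<in> lift F" "contract ` g = e" "x \<in> e"
        using lift_surj assms(1) by blast
      then obtain y where "y \<in> g" "contract y = x" by auto
      then have "y = x" using assms(2,3) by (cases "y \<in> U") (auto simp: contract_def)
      then show "e \<in> (`) contract ` {g \<in> lift F. x \<in> g}" using g \<open>y \<in> g\<close> by auto
    qed (use assms(2) in \<open>force simp: lift_def\<close>)
  qed
  then show ?thesis unfolding degree_def by (rule bij_betw_same_card)
qed

lemma degree_at_u:
  assumes "F \<subseteq> E"
  shows "card {x \<in> U. {u, nu x} \<in> F} = degree F u"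
proof -
  have "bij_betw (\<lambda>x. {u, nu x}) {x \<in> U. {u, nu x} \<in> F} {e \<in> F. u \<in> e}"
  proof (rule bij_betw_imageI)
    show "inj_on (\<lambda>x. {u, nu x}) {x \<in> U. {u, nu x} \<in> F}"
      using nu_neighbour nu_eq_iff by (auto intro!: inj_onI simp: doubleton_eq_iff)
    show "(\<lambda>x. {u, nu x}) ` {x \<in> U. {u, nu x} \<in> F} = {e \<in> F. u \<in> e}"
      using assms by (auto elim: edge_at_u)
  qed
  then show ?thesis unfolding degree_def by (rule bij_betw_same_card)
qed

lemma lifted_edges_triangle_disjoint: "lifted_edges \<inter> triangle = {}"
  using U_not_in_V edge_subset_V nu_neighbour by (fastforce simp: lifted_edges_def triangle_def doubleton_eq_iff)

lemma acyclic_edges_lift: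
  assumes "T \<subseteq> E" "acyclic_edges T"
  shows "acyclic_edges (lift T)"
proof (rule acyclic_edges_inj_image[OF _ _ _ assms(2)])
  show "inj_on ((`) contract) (lift T)"
    using inj_on_contract_lifted_edges lift_subset by (rule inj_on_subset)
  show "(`) contract ` lift T \<subseteq> T" by (auto simp: lift_def)
  show "contract x \<noteq> contract y" if "{x, y} \<in> lift T" for x y
    using that assms(1) E_edge_neq by (auto simp: lift_def)
qed

lemma lift_separates_U:
  assumes T: "T \<subseteq> E" "acyclic_edges T" and ij: "i \<in> U" "j \<in> U" "i \<noteq> j"
  shows "(i, j) \<notin> (adj (lift T))\<^sup>*"
proof
  assume path: "(i, j) \<in> (adj (lift T))\<^sup>*"
  show False
  proof (cases "{u, nu j} \<in> T")
    case False
    then have "{g \<in> lift T. j \<in> g} = {}" using lift_edges_at_U[OF ij(2), of T] by simp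
    then have "j \<notin> \<Union> (lift T)" by blast
    then show False using rtrancl_adj_isolated[OF path] ij(3) by blast
  next
    case True
    (* Contracting U - {j} alone maps the path to one from u to j, whose last edge is j nu j;
       so u reaches nu j in T without the edge u nu j. *)
    define psi where "psi x = (if x \<in> U \<and> x \<noteq> j then u else x)" for x
    let ?H = "T - {{u, nu j}}"
    have "(psi i, psi j) \<in> (adj (insert {j, nu j} ?H))\<^sup>*"
    proof (rule rtrancl_adj_image[OF path])
      fix x y assume "{x, y} \<in> lift T"
      then have xy: "{x, y} \<in> lifted_edges" "contract ` {x, y} \<in> T" by (auto simp: lift_def)
      have "psi ` {x, y} \<in> insert {j, nu j} ?H"
        using xy(1)
      proof (cases rule: lifted_edgesE)
        case outer
        then have "x \<in> V" "y \<in> V" using edge_subset_V by auto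
        then have "psi x = x" "psi y = y" using U_not_in_V by (auto simp: psi_def)
        moreover have "{x, y} \<in> ?H" using outer xy(2) contract_edge[OF outer(1)] by auto
        ultimately show ?thesis by simp
      next
        case (pendant k)
        show ?thesis
        proof (cases "k = j")
          case True
          then show ?thesis using pendant nu_neighbour by (auto simp: psi_def)
        next
          case False
          then have "nu k \<noteq> nu j" using nu_eq_iff pendant(1) ij(2) by blast
          then have "{u, nu k} \<noteq> {u, nu j}" by (auto simp: doubleton_eq_iff)
          moreover have "{u, nu k} \<in> T" using xy(2) pendant by simp
          moreover have "psi ` {x, y} = {u, nu k}"
            using pendant False nu_neighbour[OF pendant(1)] by (simp add: psi_def insert_commute)
          ultimately show ?thesis by simp
        qed
      qed
      then show "psi x = psi y \<or> {psi x, psi y} \<in> insert {j, nu j} ?H" by simp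
    qed
    then have "(u, j) \<in> (adj (insert {j, nu j} ?H))\<^sup>*" using ij by (simp add: psi_def)
    moreover have "(u, j) \<notin> (adj ?H)\<^sup>*"
    proof
      assume "(u, j) \<in> (adj ?H)\<^sup>*"
      moreover have "j \<notin> \<Union> ?H" using T(1) edge_subset_V U_not_in_V ij(2) by blast
      ultimately have "u = j" by (rule rtrancl_adj_isolated)
      then show False using u_in_V U_not_in_V ij(2) by blast
    qed
    ultimately have "(u, nu j) \<in> (adj ?H)\<^sup>*" using rtrancl_adj_insert[of u j j "nu j" ?H] by blast
    then show False using acyclic_edges_bridge[OF T(2) True] nu_neighbour[OF ij(2)] by simp
  qed
qed

lemma spanning_tree_lift:
  assumes T: "spanning_tree V E T" and U: "U = {m, a, b}" "m \<noteq> a" "m \<noteq> b" "a \<noteq> b"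
  shows "spanning_tree VH EH (insert {m, a} (insert {m, b} (lift T)))"
proof -
  let ?L = "lift T"
  let ?T' = "insert {m, a} (insert {m, b} ?L)"
  have mab: "m \<in> U" "a \<in> U" "b \<in> U" using U(1) by auto
  have TE: "T \<subseteq> E" and conn: "connected_on V T" and acyc: "acyclic_edges T"
    using T by (auto simp: spanning_tree_def)
  have sep: "(i, j) \<notin> (adj ?L)\<^sup>*" if "i \<in> U" "j \<in> U" "i \<noteq> j" for i j
    using lift_separates_U[OF TE acyc that] .
  have "acyclic_edges (insert {m, b} ?L)"
    using acyclic_edges_insert[OF acyclic_edges_lift[OF TE acyc] sep] mab U(3) by simp
  moreover have "(m, a) \<notin> (adj (insert {m, b} ?L))\<^sup>*"
    using rtrancl_adj_insert[of m a m b ?L] sep[of m a] sep[of b a] mab U(2,4) by auto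
  ultimately have acyclic: "acyclic_edges ?T'" by (rule acyclic_edges_insert)
  have star: "(m, x) \<in> (adj ?T')\<^sup>*" if "x \<in> U" for x
    using that U(1) by (auto intro: rtrancl_adj_step[OF rtrancl_refl])
  have "connected_on VH ?T'"
  proof (rule connected_on_lift[OF conn])
    show "contract ` VH \<subseteq> V" using u_in_V by (auto simp: VH_def contract_def)
  next
    fix e assume "e \<in> T"
    then obtain g where g: "g \<in> ?L" "contract ` g = e" using lift_surj[OF TE] by blast
    then obtain x y where "g = {x, y}" "x \<in> VH" "y \<in> VH"
      using lifted_edge_in_VH lift_subset by blast
    then show "\<exists>x y. {x, y} \<in> ?T' \<and> x \<in> VH \<and> y \<in> VH \<and> contract ` {x, y} = e"
      using g by blast
  next
    fix x y assume xy: "x \<in> VH" "y \<in> VH" "contract x = contract y"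
    then have "x \<in> U \<longleftrightarrow> y \<in> U" by (auto simp: VH_def contract_def split: if_splits)
    then show "(x, y) \<in> (adj ?T')\<^sup>*"
    proof (cases "x \<in> U")
      case True
      then have "y \<in> U" using \<open>x \<in> U \<longleftrightarrow> y \<in> U\<close> by simp
      then show ?thesis using rtrancl_trans[OF rtrancl_adj_sym[OF star[OF True]] star] by simp
    qed (use xy in \<open>simp add: contract_def\<close>)
  qed
  moreover have "?T' \<subseteq> EH" using lift_subset mab U(2,3) by (auto simp: EH_def triangle_def)
  ultimately show ?thesis using acyclic by (simp add: spanning_tree_def)
qed

lemma two_regular_sub_lift:
  assumes C: "two_regular_sub V E C" and no_u: "\<forall>x\<in>U. {u, nu x} \<notin> C"
  shows "two_regular_sub VH EH (lift C)"
proof -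
  have CE: "C \<subseteq> E" using C by (simp add: two_regular_sub_def)
  have "degree (lift C) x = 0 \<or> degree (lift C) x = 2" if "x \<in> VH" for x
  proof (cases "x \<in> U")
    case True
    then have none: "{e \<in> lift C. x \<in> e} = {}" using lift_edges_at_U[OF True, of C] no_u by simp
    show ?thesis unfolding degree_def none by simp
  next
    case False
    then have "x \<in> V" "x \<noteq> u" using that by (auto simp: VH_def)
    then show ?thesis using C degree_lift[OF CE] by (simp add: two_regular_sub_def)
  qed
  then show ?thesis using lift_subset by (auto simp: two_regular_sub_def EH_def)
qed

lemma two_regular_sub_lift_insert:
  assumes C: "two_regular_sub V E C" and U: "U = {m, a, b}" "m \<noteq> a" "m \<noteq> b" "a \<noteq> b"
    and in_C: "{u, nu a} \<in> C" "{u, nu b} \<in> C" "{u, nu m} \<notin> C"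
  shows "two_regular_sub VH EH (insert {a, b} (lift C))"
proof -
  let ?C' = "insert {a, b} (lift C)"
  have CE: "C \<subseteq> E" using C by (simp add: two_regular_sub_def)
  have mab: "m \<in> U" "a \<in> U" "b \<in> U" using U(1) by auto
  have "degree ?C' x = 0 \<or> degree ?C' x = 2" if "x \<in> VH" for x
  proof (cases "x \<in> U")
    case False
    then have x: "x \<in> V" "x \<noteq> u" "x \<notin> {a, b}" using that mab by (auto simp: VH_def)
    then have "{e \<in> ?C'. x \<in> e} = {e \<in> lift C. x \<in> e}" by auto
    then have "degree ?C' x = degree C x" using degree_lift[OF CE x(1,2)] by (simp add: degree_def)
    then show ?thesis using C x by (simp add: two_regular_sub_def)
  next
    case True
    then consider "x = m" | "x \<in> {a, b}" using U(1) by auto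
    then show ?thesis
    proof cases
      case 1
      then have none: "{e \<in> ?C'. x \<in> e} = {}"
        using lift_edges_at_U[OF mab(1), of C] in_C(3) U(2,3) by auto
      show ?thesis unfolding degree_def none by simp
    next
      case 2
      then have "{u, nu x} \<in> C" using in_C(1,2) by auto
      then have "{e \<in> lift C. x \<in> e} = {{x, nu x}}" using lift_edges_at_U[OF True, of C] by simp
      moreover have "{e \<in> ?C'. x \<in> e} = insert {a, b} {e \<in> lift C. x \<in> e}" using 2 by auto
      ultimately have at_x: "{e \<in> ?C'. x \<in> e} = {{a, b}, {x, nu x}}" by simp
      have "{a, b} \<noteq> {x, nu x}" using nu_neighbour(4)[OF True] mab by (auto simp: doubleton_eq_iff)
      then show ?thesis unfolding degree_def at_x by simp
    qed
  qed
  moreover have "?C' \<subseteq> EH" using lift_subset mab U(4) by (auto simp: EH_def triangle_def)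
  ultimately show ?thesis by (simp add: two_regular_sub_def)
qed

lemma matching_lift:
  assumes "matching E M"
  shows "matching EH (lift M)"
  unfolding matching_def
proof (intro conjI ballI impI)
  show "lift M \<subseteq> EH" using lift_subset by (auto simp: EH_def)
next
  fix g h assume g: "g \<in> lift M" and h: "h \<in> lift M" and "g \<noteq> h"
  then have "contract ` g \<noteq> contract ` h"
    using inj_onD[OF inj_on_contract_lifted_edges] lift_subset by blast
  moreover have "contract ` g \<in> M" "contract ` h \<in> M" using g h by (auto simp: lift_def)
  ultimately have "contract ` g \<inter> contract ` h = {}" using assms by (auto simp: matching_def)
  then show "g \<inter> h = {}" by auto
qed

lemma matching_lift_insert:
  assumes M: "matching E M" and ab: "a \<in> U" "b \<in> U" "a \<noteq> b"
    and not_M: "{u, nu a} \<notin> M" "{u, nu b} \<notin> M"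
  shows "matching EH (insert {a, b} (lift M))"
proof -
  have "g \<inter> {a, b} = {}" if "g \<in> lift M" for g
    using that lift_edges_at_U[OF ab(1), of M] lift_edges_at_U[OF ab(2), of M] not_M by auto
  moreover have "{a, b} \<in> EH" using ab by (auto simp: EH_def triangle_def)
  ultimately show ?thesis using matching_lift[OF M] by (auto simp: matching_def)
qed

lemma three_decomposition_lift:
  assumes T: "spanning_tree V E T"
    and partition: "T \<union> C \<union> M = E" "T \<inter> C = {}" "T \<inter> M = {}" "C \<inter> M = {}"
    and U: "U = {m, a, b}" "m \<noteq> a" "m \<noteq> b" "a \<noteq> b"
    and XY: "X \<union> Y = {{a, b}}" "X \<inter> Y = {}"
    and C': "two_regular_sub VH EH (lift C \<union> X)" and M': "matching EH (lift M \<union> Y)"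
  shows "three_decomposition VH EH"
proof -
  let ?T' = "insert {m, a} (insert {m, b} (lift T))"
  have "triangle = {{x, y} | x y. x \<in> U \<and> y \<in> U \<and> x \<noteq> y}" by (rule triangle_def)
  also have "\<dots> = {{m, a}, {m, b}, {a, b}}" using U by (auto simp: insert_commute)
  finally have tri: "triangle = {{m, a}, {m, b}, {a, b}}" .
  have star_neq: "{m, a} \<noteq> {a, b}" "{m, b} \<noteq> {a, b}" using U(2-4) by (auto simp: doubleton_eq_iff)
  have lifts_disjoint: "lift T \<inter> lift C = {}" "lift T \<inter> lift M = {}" "lift C \<inter> lift M = {}"
    using partition(2-4) by (auto simp: lift_def)
  have "lift T \<union> lift C \<union> lift M = lifted_edges" using partition(1) by (simp add: lift_Un[symmetric] lift_E)
  then have union: "?T' \<union> (lift C \<union> X) \<union> (lift M \<union> Y) = EH"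
    using XY(1) by (auto simp: EH_def tri)
  have lift_triangle: "lift F \<inter> triangle = {}" for F
    using lift_subset lifted_edges_triangle_disjoint by blast
  have XY_sub: "X \<subseteq> {{a, b}}" "Y \<subseteq> {{a, b}}" using XY(1) by auto
  have star_notin: "{m, a} \<notin> lift F \<union> Z" "{m, b} \<notin> lift F \<union> Z" if "Z \<subseteq> {{a, b}}" for F Z
    using that star_neq lift_triangle[of F] tri by blast+
  have lift_Z: "lift F \<inter> Z = {}" if "Z \<subseteq> {{a, b}}" for F Z
    using that lift_triangle[of F] tri by blast
  show ?thesis
    unfolding three_decomposition_def
  proof (intro exI conjI)
    show "spanning_tree VH EH ?T'" by (rule spanning_tree_lift[OF T U])
    show "two_regular_sub VH EH (lift C \<union> X)" by (rule C')
    show "matching EH (lift M \<union> Y)" by (rule M')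
    show "?T' \<union> (lift C \<union> X) \<union> (lift M \<union> Y) = EH" by (rule union)
    show "?T' \<inter> (lift C \<union> X) = {}"
      using star_notin[OF XY_sub(1)] lift_Z[OF XY_sub(1)] lifts_disjoint(1) by auto
    show "?T' \<inter> (lift M \<union> Y) = {}"
      using star_notin[OF XY_sub(2)] lift_Z[OF XY_sub(2)] lifts_disjoint(2) by auto
    show "(lift C \<union> X) \<inter> (lift M \<union> Y) = {}"
      using lift_Z[OF XY_sub(1)] lift_Z[OF XY_sub(2)] lifts_disjoint(3) XY(2) by auto
  qed
qed

theorem three_decomposition_VH_EH:
  assumes "three_decomposition V E"
  shows "three_decomposition VH EH"
proof -
  obtain T C M where T: "spanning_tree V E T" and C: "two_regular_sub V E C" and M: "matching E M"
    and partition: "T \<union> C \<union> M = E" "T \<inter> C = {}" "T \<inter> M = {}" "C \<inter> M = {}"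
    using assms by (auto simp: three_decomposition_def)
  have CE: "C \<subseteq> E" and ME: "M \<subseteq> E" using C M by (auto simp: two_regular_sub_def matching_def)
  define P where "P = {x \<in> U. {u, nu x} \<in> C}"
  have "card P = 0 \<or> card P = 2"
    using C u_in_V by (simp add: P_def degree_at_u[OF CE] two_regular_sub_def)
  then show ?thesis
  proof
    assume "card P = 2"
    moreover have "P \<subseteq> U" by (auto simp: P_def)
    ultimately obtain m a b where U: "U = {m, a, b}" "m \<noteq> a" "m \<noteq> b" "a \<noteq> b"
      and "P = {a, b}"
      using card_3_split_pair[OF card_U] by blast
    then have "a \<in> P" "b \<in> P" "m \<notin> P" by auto
    moreover have "m \<in> U" using U(1) by simp
    ultimately have "{u, nu a} \<in> C" "{u, nu b} \<in> C" "{u, nu m} \<notin> C" by (simp_all add: P_def)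
    then have "two_regular_sub VH EH (insert {a, b} (lift C))"
      by (rule two_regular_sub_lift_insert[OF C U])
    then show ?thesis
      using three_decomposition_lift[OF T partition U, of "{{a, b}}" "{}"] matching_lift[OF M] by simp
  next
    assume "card P = 0"
    then have no_u: "\<forall>x\<in>U. {u, nu x} \<notin> C" using card_U by (simp add: P_def card_ge_0_finite)
    have "card {x \<in> U. {u, nu x} \<in> M} \<le> 1"
      using degree_matching_le_1[OF M] by (simp add: degree_at_u[OF ME])
    moreover have "finite U" "U \<noteq> {}" using card_U by (auto simp: card_ge_0_finite)
    ultimately obtain m where "m \<in> U" and at_u: "{x \<in> U. {u, nu x} \<in> M} \<subseteq> {m}"
      using card_le_1_subset_singleton[of U "{x \<in> U. {u, nu x} \<in> M}"] by blast
    then obtain a b where U: "U = {m, a, b}" "m \<noteq> a" "m \<noteq> b" "a \<noteq> b"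
      using card_3_split_point[OF card_U] by blast
    have "a \<in> U" "b \<in> U" using U(1) by simp_all
    then have "{u, nu a} \<notin> M" "{u, nu b} \<notin> M" using at_u U(2,3) by auto
    then have "matching EH (insert {a, b} (lift M))"
      using matching_lift_insert[OF M \<open>a \<in> U\<close> \<open>b \<in> U\<close> U(4)] by blast
    then show ?thesis
      using three_decomposition_lift[OF T partition U, of "{}" "{{a, b}}"] two_regular_sub_lift[OF C no_u]
      by simp
  qed
qed

end

lemma cubic_neighbours:
  assumes "cubic V E" "u \<in> V" "{u, v1} \<in> E" "{u, v2} \<in> E" "{u, v3} \<in> E"
    and "v1 \<noteq> v2" "v1 \<noteq> v3" "v2 \<noteq> v3"
  shows "{v. {u, v} \<in> E} = {v1, v2, v3}"
proof -
  have graph: "simple_graph V E" and deg: "degree E u = 3"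
    using assms(1,2) by (auto simp: cubic_def)
  have loopless: "x \<noteq> y" if "{x, y} \<in> E" for x y
    using that graph by (auto simp: simple_graph_def doubleton_eq_iff)
  have "E \<subseteq> Pow V" using graph by (auto simp: simple_graph_def)
  then have "finite {e \<in> E. u \<in> e}" using graph by (auto simp: simple_graph_def intro: finite_subset)
  moreover have sub: "{{u, v1}, {u, v2}, {u, v3}} \<subseteq> {e \<in> E. u \<in> e}" using assms(3-5) by auto
  moreover have "card {{u, v1}, {u, v2}, {u, v3}} = 3"
    using assms(3-8) loopless by (auto simp: doubleton_eq_iff)
  ultimately have "{{u, v1}, {u, v2}, {u, v3}} = {e \<in> E. u \<in> e}"
    using deg by (intro card_subset_eq) (auto simp: degree_def)
  show ?thesis
  proof (intro equalityI subsetI)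
    fix v assume "v \<in> {v. {u, v} \<in> E}"
    then have "{u, v} \<in> {{u, v1}, {u, v2}, {u, v3}}" "v \<noteq> u"
      using \<open>{{u, v1}, {u, v2}, {u, v3}} = _\<close> loopless by auto
    then show "v \<in> {v1, v2, v3}" by (auto simp: doubleton_eq_iff)
  qed (use assms(3-5) in auto)
qed

theorem lemma14:
  fixes V :: "'a set" and E :: "'a set set" and u v1 v2 v3 u1 u2 u3 :: 'a
  assumes "cubic V E"
    and "three_decomposition V E"
    and "u \<in> V"
    and "{u, v1} \<in> E" and "{u, v2} \<in> E" and "{u, v3} \<in> E"
    and "v1 \<noteq> v2" and "v1 \<noteq> v3" and "v2 \<noteq> v3"
    and "u1 \<notin> V" and "u2 \<notin> V" and "u3 \<notin> V"
    and "u1 \<noteq> u2" and "u1 \<noteq> u3" and "u2 \<noteq> u3"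
  shows "three_decomposition ((V - {u}) \<union> {u1, u2, u3})
           ({e \<in> E. u \<notin> e} \<union>
            {{u1, u2}, {u2, u3}, {u3, u1}, {u1, v1}, {u2, v2}, {u3, v3}})"
proof -
  define nu where "nu x = (if x = u1 then v1 else if x = u2 then v2 else v3)" for x
  have nu: "nu u1 = v1" "nu u2 = v2" "nu u3 = v3" using assms(13-15) by (auto simp: nu_def)
  interpret triangle_replacement V E u "{u1, u2, u3}" nu
  proof
    show "simple_graph V E" using assms(1) by (simp add: cubic_def)
    show "bij_betw nu {u1, u2, u3} {v. {u, v} \<in> E}"
      unfolding cubic_neighbours[OF assms(1,3-9)] bij_betw_def
      using nu assms(7-9,13-15) by (auto simp: inj_on_def)
  qed (use assms(3,10-15) in auto)
  have "lifted_edges = {e \<in> E. u \<notin> e} \<union> {{u1, v1}, {u2, v2}, {u3, v3}}"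
    using nu by (auto simp: lifted_edges_def)
  moreover have "triangle = {{u1, u2}, {u2, u3}, {u3, u1}}"
    using assms(13-15) by (auto simp: triangle_def insert_commute)
  ultimately show ?thesis
    using three_decomposition_VH_EH[OF assms(2)] by (simp add: VH_def EH_def Un_ac insert_commute)
qed

end
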